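(* Let $\mu,\nu$ be Borel probability measures on $\mathbb R$ such that $\operatorname{diam}\operatorname{supp}\mu=\operatorname{diam}\operatorname{supp}\nu<\infty$ and $\mu\prec\nu$. Then the mm-spaces $(\mathbb R,|\cdot|,\mu)$ and $(\mathbb R,|\cdot|,\nu)$ are mm-isomorphic.
   Context: An mm-space is a triple $(X,d_X,\mu_X)$ where $(X,d_X)$ is a complete separable metric space and $\mu_X$ is a Borel probability measure. Two mm-spaces $X,Y$ are mm-isomorphic if there is an isometry $f:\operatorname{supp}\mu_X\to\operatorname{supp}\mu_Y$ with $f_*\mu_X=\mu_Y$. For mm-spaces, $Y\prec X$ if there is a 1-Lipschitz map $f:\operatorname{supp}\mu_X\to\operatorname{supp}\mu_Y$ with $f_*\mu_X=\mu_Y$. For Borel probability measures $\mu,\nu$ on $\mathbb R$, $\mu\prec\nu$ means $(\mathbb R,|\cdot|,\mu)\prec(\mathbb R,|\cdot|,\nu)$. The diameter of a set $A$ is $\sup_{x,y\in A}|x-y|$. *)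

theory Defs
  imports "HOL-Probability.Probability"
begin

text \<open>Support of a Borel measure on a metric space: points all of whose open
  balls have positive measure (equivalently the smallest closed set of full measure
  in a separable space).\<close>
definition msupp :: "'a::metric_space measure \<Rightarrow> 'a set" where
  "msupp M = {x. \<forall>e>0. emeasure M (ball x e) > 0}"

definition pushes_to :: "('a::metric_space \<Rightarrow> 'b::metric_space) \<Rightarrow> 'a measure \<Rightarrow> 'b measure \<Rightarrow> bool" where
  "pushes_to f N M \<longleftrightarrow> (\<forall>A \<in> sets M. emeasure M A = emeasure N {x \<in> msupp N. f x \<in> A})"

definition lip_dom :: "real measure \<Rightarrow> real measure \<Rightarrow> bool" where
  "lip_dom \<mu> \<nu> \<longleftrightarrow> (\<exists>f. f ` msupp \<nu> \<subseteq> msupp \<mu>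
      \<and> (\<forall>x\<in>msupp \<nu>. \<forall>y\<in>msupp \<nu>. dist (f x) (f y) \<le> dist x y)
      \<and> pushes_to f \<nu> \<mu>)"

definition mm_iso :: "real measure \<Rightarrow> real measure \<Rightarrow> bool" where
  "mm_iso \<mu> \<nu> \<longleftrightarrow> (\<exists>f. f ` msupp \<mu> = msupp \<nu>
      \<and> (\<forall>x\<in>msupp \<mu>. \<forall>y\<in>msupp \<mu>. dist (f x) (f y) = dist x y)
      \<and> pushes_to f \<mu> \<nu>)"

end

theory Submission
  imports Defs
begin

text \<open>A 1-Lipschitz map from supp \<nu> onto supp \<mu> (onto because it pushes \<nu> to \<mu>
  and has compact image) must realise diam supp \<mu> as the distance of two image
  points f p, f q. Since |p - q| \<le> diam supp \<nu> = diam supp \<mu>, the points p, q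
  are extremal in supp \<nu>, and the Lipschitz bounds towards p and towards q
  force f to be a reflection or translation on supp \<nu>. Its global affine
  inverse is then an isometry pushing \<mu> back to \<nu>.\<close>

lemma msupp_complement_eq:
  fixes M :: "'a::metric_space measure"
  assumes "sets M = sets borel"
  shows "- msupp M = \<Union>{ball x e | x e. e > 0 \<and> emeasure M (ball x e) = 0}"
proof (intro equalityI subsetI)
  fix x assume "x \<in> - msupp M"
  then obtain e where "e > 0" "emeasure M (ball x e) = 0" by (auto simp: msupp_def)
  then show "x \<in> \<Union>{ball x e | x e. e > 0 \<and> emeasure M (ball x e) = 0}" by force
next
  fix y assume "y \<in> \<Union>{ball x e | x e. e > 0 \<and> emeasure M (ball x e) = 0}"
  then obtain x e where xe: "emeasure M (ball x e) = 0" "y \<in> ball x e" by auto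
  define d where "d = e - dist x y"
  have "d > 0" using xe(2) by (simp add: d_def)
  have "ball y d \<subseteq> ball x e"
    unfolding d_def by (smt (verit) dist_triangle mem_ball subsetI)
  moreover have "ball x e \<in> sets M" by (simp add: assms borel_open)
  ultimately have "emeasure M (ball y d) \<le> emeasure M (ball x e)"
    by (rule emeasure_mono)
  then have "emeasure M (ball y d) = 0" using xe(1) by simp
  then show "y \<in> - msupp M" using \<open>d > 0\<close> by (auto simp: msupp_def)
qed

lemma closed_msupp:
  fixes M :: "'a::metric_space measure"
  assumes "sets M = sets borel"
  shows "closed (msupp M)"
proof -
  have "open (- msupp M)" unfolding msupp_complement_eq[OF assms] by auto
  then show ?thesis by (simp add: closed_open)
qed

lemma sets_msupp:
  fixes M :: "'a::metric_space measure"
  assumes "sets M = sets borel"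
  shows "msupp M \<in> sets M"
  using closed_msupp[OF assms] by (simp add: assms)

lemma complement_msupp_null:
  fixes M :: "'a::{metric_space, second_countable_topology} measure"
  assumes "sets M = sets borel"
  shows "- msupp M \<in> null_sets M"
proof -
  let ?F = "{ball x e | x e. e > 0 \<and> emeasure M (ball x e) = 0}"
  obtain F' where F': "F' \<subseteq> ?F" "countable F'" "\<Union>F' = \<Union>?F"
    using Lindelof[of ?F] by auto
  have "(\<Union>B\<in>F'. B) \<in> null_sets M"
    using F'(1) by (intro null_sets_UN'[OF F'(2)]) (auto simp: null_sets_def assms)
  then show ?thesis using F'(3) msupp_complement_eq[OF assms] by simp
qed

lemma emeasure_Int_msupp:
  fixes M :: "'a::{metric_space, second_countable_topology} measure"
  assumes "sets M = sets borel" and "A \<in> sets M"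
  shows "emeasure M (A \<inter> msupp M) = emeasure M A"
  using emeasure_Diff_null_set[OF complement_msupp_null[OF assms(1)] assms(2)]
  by (simp add: Diff_eq)

lemma msupp_nonempty:
  fixes M :: "'a::{metric_space, second_countable_topology} measure"
  assumes "prob_space M" and "sets M = sets borel"
  shows "msupp M \<noteq> {}"
proof
  assume "msupp M = {}"
  then have "emeasure M (space M) = 0"
    using emeasure_Int_msupp[OF assms(2) sets.top] by simp
  then show False using prob_space.emeasure_space_1[OF assms(1)] by simp
qed

lemma msupp_subset_image_if_pushes_to:
  assumes "pushes_to f N M" and "sets M = sets borel" and "closed (f ` msupp N)"
  shows "msupp M \<subseteq> f ` msupp N"
proof
  fix y assume y: "y \<in> msupp M"
  show "y \<in> f ` msupp N"
  proof (rule ccontr)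
    assume "y \<notin> f ` msupp N"
    moreover have "open (- f ` msupp N)" using assms(3) by (simp add: closed_def)
    ultimately obtain e where "e > 0" and "ball y e \<subseteq> - f ` msupp N"
      by (meson ComplI open_contains_ball)
    then have e: "ball y e \<inter> f ` msupp N = {}" by auto
    have "emeasure M (ball y e) = emeasure N {x \<in> msupp N. f x \<in> ball y e}"
      using assms(1,2) by (simp add: pushes_to_def)
    also have "{x \<in> msupp N. f x \<in> ball y e} = {}" using e by auto
    finally show False using y \<open>e > 0\<close> by (auto simp: msupp_def)
  qed
qed

lemma lipschitz_diameter_eq_imp_affine_isometry:
  fixes f :: "real \<Rightarrow> real"
  assumes "compact S" and "S \<noteq> {}" and lip: "1-lipschitz_on S f"
    and "diameter (f ` S) = diameter S"
  obtains c s where "\<bar>s\<bar> = 1" and "\<And>x. x \<in> S \<Longrightarrow> f x = c + s * x"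
proof -
  have "compact (f ` S)"
    using compact_continuous_image[OF lipschitz_on_continuous_on[OF lip] assms(1)] .
  then obtain p q where pq: "p \<in> S" "q \<in> S" "\<bar>f p - f q\<bar> = diameter S"
    using diameter_compact_attained[of "f ` S"] assms(2,4) by (auto simp: dist_real_def)
  have lipS: "\<bar>f x - f y\<bar> \<le> \<bar>x - y\<bar>" if "x \<in> S" "y \<in> S" for x y
    using lipschitz_onD[OF lip that] by (simp add: dist_real_def)
  have diamS: "\<bar>x - y\<bar> \<le> diameter S" if "x \<in> S" "y \<in> S" for x y
    using diameter_bounded_bound[OF compact_imp_bounded[OF assms(1)] that]
    by (simp add: dist_real_def)
  define s :: real where "s = (if (p \<le> q) = (f p \<le> f q) then 1 else -1)"
  show thesis
  proof
    show "\<bar>s\<bar> = 1" by (simp add: s_def)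
  next
    fix x assume x: "x \<in> S"
    note bounds = lipS[OF x pq(1)] lipS[OF x pq(2)] lipS[OF pq(1,2)]
      diamS[OF x pq(1)] diamS[OF x pq(2)] diamS[OF pq(1,2)] pq(3)
    show "f x = (f p - s * p) + s * x"
    proof (cases "(p \<le> q) = (f p \<le> f q)")
      case True
      then have "s = 1" by (simp add: s_def)
      moreover have "f x = f p - p + x" using True bounds by (smt (verit))
      ultimately show ?thesis by simp
    next
      case False
      then have "s = -1" by (simp add: s_def)
      moreover have "f x = f p + p - x" using False bounds by (smt (verit))
      ultimately show ?thesis by simp
    qed
  qed
qed

text \<open>The preimage of A under g meets supp N exactly in A \<inter> supp N, which has
  the same measure as A because the complement of the support is null.\<close>

lemma pushes_to_left_inverse:
  fixes f :: "'a::{metric_space, second_countable_topology} \<Rightarrow> 'b::metric_space"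
  assumes push: "pushes_to f N M" and image: "f ` msupp N = msupp M"
    and inv: "\<And>x. x \<in> msupp N \<Longrightarrow> g (f x) = x"
    and g: "g \<in> borel_measurable borel"
    and M: "sets M = sets borel" and N: "sets N = sets borel"
  shows "pushes_to g M N"
  unfolding pushes_to_def
proof
  fix A assume A: "A \<in> sets N"
  have "{y \<in> msupp M. g y \<in> A} = msupp M \<inter> (g -` A \<inter> space borel)" by auto
  also have "\<dots> \<in> sets M"
    using sets_msupp[OF M] measurable_sets[OF g, of A] A by (simp add: M N)
  finally have "emeasure M {y \<in> msupp M. g y \<in> A}
      = emeasure N {x \<in> msupp N. f x \<in> msupp M \<and> g (f x) \<in> A}"
    using push by (simp add: pushes_to_def)
  also have "{x \<in> msupp N. f x \<in> msupp M \<and> g (f x) \<in> A} = A \<inter> msupp N"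
    using image inv by auto
  also have "emeasure N (A \<inter> msupp N) = emeasure N A"
    using emeasure_Int_msupp[OF N A] .
  finally show "emeasure N A = emeasure M {y \<in> msupp M. g y \<in> A}" by simp
qed

theorem lemma4p1:
  fixes \<mu> \<nu> :: "real measure"
  assumes "prob_space \<mu>" and "sets \<mu> = sets borel"
    and "prob_space \<nu>" and "sets \<nu> = sets borel"
    and "bounded (msupp \<mu>)" and "bounded (msupp \<nu>)"
    and "diameter (msupp \<mu>) = diameter (msupp \<nu>)"
    and "lip_dom \<mu> \<nu>"
  shows "mm_iso \<mu> \<nu>"
proof -
  obtain f where into: "f ` msupp \<nu> \<subseteq> msupp \<mu>" and lip: "1-lipschitz_on (msupp \<nu>) f"
    and push: "pushes_to f \<nu> \<mu>"
    using assms(8) by (auto simp: lip_dom_def lipschitz_on_def)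
  have compact: "compact (msupp \<nu>)"
    using closed_msupp[OF assms(4)] assms(6) by (simp add: compact_eq_bounded_closed)
  have "closed (f ` msupp \<nu>)"
    by (intro compact_imp_closed compact_continuous_image lipschitz_on_continuous_on[OF lip] compact)
  then have image: "f ` msupp \<nu> = msupp \<mu>"
    using into msupp_subset_image_if_pushes_to[OF push assms(2)] by blast
  obtain c s where s: "\<bar>s\<bar> = 1" and affine: "\<And>x. x \<in> msupp \<nu> \<Longrightarrow> f x = c + s * x"
    using lipschitz_diameter_eq_imp_affine_isometry[OF compact msupp_nonempty[OF assms(3,4)] lip]
      image assms(7) by metis
  define g where "g y = s * (y - c)" for y
  have inv: "g (f x) = x" if "x \<in> msupp \<nu>" for x
  proof -
    have "s * s = 1" by (metis s abs_mult_self_eq mult_1)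
    then show ?thesis using affine[OF that] by (simp add: g_def algebra_simps)
  qed
  have "g ` msupp \<mu> = msupp \<nu>"
    unfolding image[symmetric] image_image using inv by simp
  moreover have "dist (g x) (g y) = dist x y" for x y
    using s by (simp add: g_def dist_real_def abs_mult flip: right_diff_distrib)
  moreover have "pushes_to g \<mu> \<nu>"
    by (rule pushes_to_left_inverse[OF push image inv _ assms(2,4)]) (unfold g_def, measurable)
  ultimately show ?thesis by (auto simp: mm_iso_def)
qed

end
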